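(* Let $h_1,h_2,\dots$ be a sequence of positive integers satisfying the repeat property, and let $w>0$. For each $t$ define $f_t:\mathbb{Z}_{\ge0}\to\mathbb{R}$ by $f_t(m)=w$ if $m<h_t$ and $f_t(m)=0$ otherwise, and for a finite interval of times $I$ let $f_I(m)=\sum_{t\in I}f_t(m)$. Then for every finite interval $I$ and every integer $m\ge 2$, $$f_I(m-1)-f_I(m)\ \ge\ f_I(m)-f_I(m+1)-w.$$
   Context: A sequence $h_1,h_2,\dots$ of positive integers has the repeat property if for all $t_1<t_2$ with $h_{t_1}=h_{t_2}$ we have $\{2,3,\dots,h_{t_1}-1\}\subseteq\{h_{t_1+1},h_{t_1+2},\dots,h_{t_2-1}\}$. (Such sequences are exactly the sequences of positions, in the Belady ranking, of requested pages within one weight class; $f_t$ is the cost of a canonical algorithm holding $m$ pages of that class.) *)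

theory Defs
  imports Complex_Main
begin

text \<open>Sequences are indexed from 1: only the values h t for t >= 1 matter.\<close>

definition repeat_property :: "(nat \<Rightarrow> nat) \<Rightarrow> bool" where
  "repeat_property h \<longleftrightarrow>
     (\<forall>t. 1 \<le> t \<longrightarrow> 0 < h t) \<and>
     (\<forall>t1 t2. 1 \<le> t1 \<longrightarrow> t1 < t2 \<longrightarrow> h t1 = h t2 \<longrightarrow>
        {2..<h t1} \<subseteq> h ` {t1<..<t2})"

definition f_t :: "(nat \<Rightarrow> nat) \<Rightarrow> real \<Rightarrow> nat \<Rightarrow> nat \<Rightarrow> real" where
  "f_t h w t m = (if m < h t then w else 0)"

definition f_I :: "(nat \<Rightarrow> nat) \<Rightarrow> real \<Rightarrow> nat set \<Rightarrow> nat \<Rightarrow> real" where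
  "f_I h w I m = (\<Sum>t\<in>I. f_t h w t m)"

end

theory Submission
  imports Defs
begin

text \<open>Each f_t drops by w exactly between m - 1 and m where m = h t, so
  f_I(m - 1) - f_I(m) is w times the number of times in I with h t = m. The repeat property
  forces a time with h t = m strictly between any two times with h t = m + 1 (as m \<ge> 2),
  so the latter times are at most one more than the former.\<close>

lemma f_I_diff_eq_card:
  assumes "finite S" "k \<ge> 1"
  shows "f_I h w S (k - 1) - f_I h w S k = w * card {t\<in>S. h t = k}"
proof -
  have "f_I h w S (k - 1) - f_I h w S k = (\<Sum>t\<in>S. if h t = k then w else 0)"
    unfolding f_I_def sum_subtractf[symmetric]
    using assms(2) by (intro sum.cong) (auto simp: f_t_def)
  also have "\<dots> = w * card {t\<in>S. h t = k}"
    using assms(1) by (simp add: sum.If_cases Int_def conj_commute)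
  finally show ?thesis .
qed

lemma card_le_Suc_card_if_separating:
  fixes A B :: "'a::wellorder set"
  assumes "finite B"
    and separating: "\<And>x y. x \<in> A \<Longrightarrow> y \<in> A \<Longrightarrow> x < y \<Longrightarrow> \<exists>b\<in>B. x < b \<and> b < y"
  shows "card A \<le> Suc (card B)"
proof (cases "finite A \<and> A \<noteq> {}")
  case False
  then show ?thesis by auto
next
  case True
  \<comment> \<open>Sending x to the next element of B separates the elements of A other than its maximum.\<close>
  define g where "g x = (LEAST b. b \<in> B \<and> x < b)" for x
  have g_between: "x < g x \<and> g x < y \<and> g x \<in> B" if xy: "x \<in> A" "y \<in> A" "x < y" for x y
  proof -
    obtain b where b: "b \<in> B" "x < b" "b < y" using separating[OF xy] by blast
    have "g x \<in> B \<and> x < g x" unfolding g_def by (rule LeastI[of _ b]) (use b in auto)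
    moreover have "g x \<le> b" unfolding g_def by (rule Least_le) (use b in auto)
    ultimately show ?thesis using b by auto
  qed
  have below_Max: "x < Max A" if "x \<in> A - {Max A}" for x
    using that True by (simp add: order.not_eq_order_implies_strict)
  have "inj_on g (A - {Max A})"
  proof (rule inj_onI, rule ccontr)
    fix x y assume x: "x \<in> A - {Max A}" and y: "y \<in> A - {Max A}" and "g x = g y" "x \<noteq> y"
    moreover have "x < y \<Longrightarrow> g x < y \<and> y < g y" "y < x \<Longrightarrow> g y < x \<and> x < g x"
      using g_between[of x y] g_between[of y x] g_between[of x "Max A"] g_between[of y "Max A"]
        x y below_Max[OF x] below_Max[OF y] True by auto
    ultimately show False by (metis less_asym neqE)
  qed
  moreover have "g ` (A - {Max A}) \<subseteq> B"
    using g_between below_Max True by (meson Diff_iff Max_in image_subsetI)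
  ultimately have "card (A - {Max A}) \<le> card B"
    using assms(1) by (rule card_inj_on_le)
  then show ?thesis
    using True by (simp add: card_Diff_singleton)
qed

lemma repeat_property_between:
  assumes "repeat_property h" "1 \<le> t1" "t1 < t2" "h t1 = h t2" "2 \<le> k" "k < h t1"
  shows "\<exists>s. t1 < s \<and> s < t2 \<and> h s = k"
proof -
  have "{2..<h t1} \<subseteq> h ` {t1<..<t2}"
    using assms(1-4) unfolding repeat_property_def by blast
  then have "k \<in> h ` {t1<..<t2}"
    using assms(5,6) by auto
  then show ?thesis by auto
qed

theorem lemma6:
  fixes h :: "nat \<Rightarrow> nat" and w :: real and a b m :: nat
  assumes "repeat_property h"
    and "w > 0"
    and "1 \<le> a"
    and "m \<ge> 2"
  shows "f_I h w {a..b} (m - 1) - f_I h w {a..b} m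
           \<ge> f_I h w {a..b} m - f_I h w {a..b} (m + 1) - w"
proof -
  let ?level = "\<lambda>k. card {t\<in>{a..b}. h t = k}"
  have "?level (m + 1) \<le> Suc (?level m)"
  proof (rule card_le_Suc_card_if_separating)
    fix x y assume "x \<in> {t\<in>{a..b}. h t = m + 1}" "y \<in> {t\<in>{a..b}. h t = m + 1}" "x < y"
    then show "\<exists>s\<in>{t\<in>{a..b}. h t = m}. x < s \<and> s < y"
      using repeat_property_between[OF assms(1), of x y m] assms(3,4) by fastforce
  qed simp
  then have "w * ?level (m + 1) \<le> w * ?level m + w"
    using mult_left_mono[of "real (?level (m + 1))" "real (?level m) + 1" w] assms(2)
    by (simp add: distrib_left)
  moreover have "f_I h w {a..b} (m - 1) - f_I h w {a..b} m = w * ?level m"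
    using assms(4) by (intro f_I_diff_eq_card) auto
  moreover have "f_I h w {a..b} m - f_I h w {a..b} (m + 1) = w * ?level (m + 1)"
    using f_I_diff_eq_card[of "{a..b}" "m + 1" h w] by simp
  ultimately show ?thesis by linarith
qed

end
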